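(* Let $(y_k)_{k\in\mathbb{N}}$ be a sequence in $\mathbb{W}$ with $y_k\in\mathbb{W}_{N(y_k)}$ and $N(y_k)\to\infty$. Let $(\mu,\nu)$ be a pair of diffuse probability measures on $[0,1]$ with $\frac12(\mu+\nu)=\lambda$ (Lebesgue measure on $[0,1]$), and let $y$ be the point of the Doob--Martin boundary corresponding to $(\mu,\nu)$. Then $y_k\to y$ in the Doob--Martin topology if and only if \[ \lim_{k\to\infty}\frac{\binom{y_k}{w}}{\binom{N(y_k)}{m}^2} = \mu^{\otimes m}\otimes\nu^{\otimes m}(\mathcal{S}(w)) \] for all $w\in\mathbb{W}_m$ and all $m\in\mathbb{N}$. Equivalently, $y_k\to y$ if and only if for each $m\in\mathbb{N}$ the random word in $\mathbb{W}_m$ obtained by selecting $m$ letters $a$ and $m$ letters $b$ uniformly at random from $y_k$ and keeping their relative order converges in distribution as $k\to\infty$ to $\mathcal{W}((X_1,\dots,X_m,Y_1,\dots,Y_m))$, where $X_1,X_2,\dots$ are i.i.d. with law $\mu$, $Y_1,Y_2,\dots$ are i.i.d. with law $\nu$, and the two sequences are independent.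
   Context: $\mathbb{W}_n$ is the set of words over $\{a,b\}$ with $n$ letters $a$ and $n$ letters $b$, $\mathbb{W}=\bigsqcup_n\mathbb{W}_n$, and $N(w)=n$ for $w\in\mathbb{W}_n$. $\binom{w}{v}$ is the number of occurrences of $v$ as a (not necessarily contiguous) sub-word of $w$. The Markov chain on $\mathbb{W}$ starts at the empty word and, from a word in $\mathbb{W}_n$, inserts a letter $a$ uniformly at random into one of the $2n+1$ slots and then a letter $b$ uniformly into one of the $2n+2$ slots. Its Doob--Martin kernel with reference state the empty word is $K(v,w)=\binom{w}{v}\binom{2m}{m}/\binom{m+n}{m}^2$ for $v\in\mathbb{W}_m$, $w\in\mathbb{W}_{m+n}$ (and $0$ if $N(w)<N(v)$). The Doob--Martin compactification is the closure of $\{K(\cdot,w):w\in\mathbb{W}\}$ in $\mathbb{R}_+^{\mathbb{W}}$ (pointwise convergence): $w_k\to z$ iff $K(v,w_k)\to K(v,z)$ for every $v\in\mathbb{W}$, where $K(\cdot,z)$ is the extended kernel; the boundary consists of the limit points not in $\mathbb{W}$. For $(x_1,\dots,x_n,y_1,\dots,y_n)\in\mathbb{R}^{2n}$ with distinct entries, listing the entries in increasing order as $z_1<\dots<z_{2n}$, $\mathcal{W}((x_1,\dots,x_n,y_1,\dots,y_n))=u_1\cdots u_{2n}\in\mathbb{W}_n$ with $u_i=a$ if $z_i\in\{x_1,\dots,x_n\}$ and $u_i=b$ if $z_i\in\{y_1,\dots,y_n\}$; for $v\in\mathbb{W}_n$, $\mathcal{S}(v):=\mathcal{W}^{-1}(\{v\})\subset\mathbb{R}^{2n}$.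 The boundary point corresponding to $(\mu,\nu)$ is the boundary point $y$ whose extended kernel is $K(w,y)=\binom{2m}{m}\mu^{\otimes m}\otimes\nu^{\otimes m}(\mathcal{S}(w))$ for $w\in\mathbb{W}_m$, $m\in\mathbb{N}_0$. *)

theory Defs
  imports "HOL-Probability.Probability"
begin

text \<open>Words over the alphabet {a,b}: letter a is encoded as True, letter b as False.\<close>
type_synonym word = "bool list"

definition num_a :: "word \<Rightarrow> nat" where
  "num_a w = length (filter id w)"

definition num_b :: "word \<Rightarrow> nat" where
  "num_b w = length (filter Not w)"

definition Wn :: "nat \<Rightarrow> word set" where
  "Wn n = {w. num_a w = n \<and> num_b w = n}"

definition Wall :: "word set" where
  "Wall = {w. num_a w = num_b w}"

definition NN :: "word \<Rightarrow> nat" where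
  "NN w = num_a w"

text \<open>binom(w,v): number of occurrences of v as a (not necessarily contiguous) sub-word of w,
  i.e. number of index sets I of positions of w, |I| = |v|, whose letters read in order give v.\<close>
definition subword_count :: "word \<Rightarrow> word \<Rightarrow> nat" where
  "subword_count w v = card {I. I \<subseteq> {..<length w} \<and> card I = length v
        \<and> map (\<lambda>i. w ! i) (sorted_list_of_set I) = v}"

text \<open>Doob--Martin kernel K(v,w) with reference state the empty word.\<close>
definition DM_kernel :: "word \<Rightarrow> word \<Rightarrow> real" where
  "DM_kernel v w = (if NN w < NN v then 0
     else real (subword_count w v) * real ((2 * NN v) choose (NN v))
          / (real (NN w choose NN v))^2)"

text \<open>Convergence in the Doob--Martin topology of a sequence of words to a point of the
  compactification, the latter represented by its (extended) kernel function h = K(.,y):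
  pointwise convergence K(v, w_k) \<rightarrow> K(v, y) for every v in W.\<close>
definition DM_converges :: "(nat \<Rightarrow> word) \<Rightarrow> (word \<Rightarrow> real) \<Rightarrow> bool" where
  "DM_converges ys h \<longleftrightarrow> (\<forall>v\<in>Wall. (\<lambda>k. DM_kernel v (ys k)) \<longlonglongrightarrow> h v)"

text \<open>The word map \<W>: for x = (x_1..x_m, y_1..y_m) encoded as x 0 .. x (m-1) (the x's) and
  x m .. x (2m-1) (the y's), list the entries in increasing order and record a/b.\<close>
definition word_of :: "nat \<Rightarrow> (nat \<Rightarrow> real) \<Rightarrow> word" where
  "word_of m x = map (\<lambda>z. z \<in> x ` {..<m}) (sorted_list_of_set (x ` {..<2*m}))"

definition prodM :: "real measure \<Rightarrow> real measure \<Rightarrow> nat \<Rightarrow> (nat \<Rightarrow> real) measure" where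
  "prodM \<mu> \<nu> m = PiM {..<2*m} (\<lambda>i. if i < m then \<mu> else \<nu>)"

definition S_set :: "real measure \<Rightarrow> real measure \<Rightarrow> nat \<Rightarrow> word \<Rightarrow> (nat \<Rightarrow> real) set" where
  "S_set \<mu> \<nu> m w = {x \<in> space (prodM \<mu> \<nu> m). inj_on x {..<2*m} \<and> word_of m x = w}"

definition boundary_kernel :: "real measure \<Rightarrow> real measure \<Rightarrow> word \<Rightarrow> real" where
  "boundary_kernel \<mu> \<nu> w =
     real ((2 * NN w) choose (NN w)) * measure (prodM \<mu> \<nu> (NN w)) (S_set \<mu> \<nu> (NN w) w)"

definition random_subword :: "word \<Rightarrow> nat \<Rightarrow> word pmf" where
  "random_subword u m = map_pmf (\<lambda>(A, B). map (\<lambda>i. u ! i) (sorted_list_of_set (A \<union> B)))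
     (pmf_of_set {(A, B). A \<subseteq> {i. i < length u \<and> u ! i} \<and> card A = m
                        \<and> B \<subseteq> {i. i < length u \<and> \<not> u ! i} \<and> card B = m})"

definition limit_word_law :: "real measure \<Rightarrow> real measure \<Rightarrow> nat \<Rightarrow> word measure" where
  "limit_word_law \<mu> \<nu> m = distr (prodM \<mu> \<nu> m) (count_space UNIV) (word_of m)"

text \<open>Convergence in distribution of random words (discrete topology on words):
  expectations of all bounded (necessarily continuous) test functions converge.\<close>
definition conv_in_distr :: "(nat \<Rightarrow> word measure) \<Rightarrow> word measure \<Rightarrow> bool" where
  "conv_in_distr Ms M \<longleftrightarrow> (\<forall>f :: word \<Rightarrow> real. bounded (range f) \<longrightarrow>
      (\<lambda>k. integral\<^sup>L (Ms k) f) \<longlonglongrightarrow> integral\<^sup>L M f)"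

end

theory Submission
  imports Defs
begin

text \<open>
  For \<open>w \<in> W\<^sub>m\<close> and \<open>N(u) \<ge> m\<close> the kernel \<open>K(w, u)\<close> is \<open>binom(2m, m)\<close> times the ratio
  \<open>binom(u, w) / binom(N(u), m)\<^sup>2\<close>, and \<open>K(w, y)\<close> is \<open>binom(2m, m)\<close> times
  \<open>\<mu>\<^sup>m \<otimes> \<nu>\<^sup>m(S(w))\<close>; since \<open>N(y\<^sub>k) \<rightarrow> \<infinity>\<close>, the first equivalence is a rescaling.
  The same ratio is exactly the probability that the random sub-word of \<open>u\<close> equals \<open>w\<close>,
  as the admissible choices of positions correspond bijectively to occurrences of \<open>w\<close>.
  Since \<open>\<mu>\<close> and \<open>\<nu>\<close> are diffuse, ties among the \<open>X\<^sub>i, Y\<^sub>j\<close> are a null event, so the limit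
  law gives mass \<open>\<mu>\<^sup>m \<otimes> \<nu>\<^sup>m(S(w))\<close> to \<open>w\<close>. Both laws live on the finite set \<open>W\<^sub>m\<close>, where
  convergence in distribution is convergence of point masses.
\<close>

lemma sorted_list_of_set_image_strict_mono:
  fixes \<phi> :: "'a::linorder \<Rightarrow> 'b::linorder"
  assumes "finite S" and "strict_mono_on S \<phi>"
  shows "sorted_list_of_set (\<phi> ` S) = map \<phi> (sorted_list_of_set S)"
proof -
  have "sorted_wrt (<) (sorted_list_of_set S)" by simp
  then have "sorted_wrt (<) (map \<phi> (sorted_list_of_set S))"
    unfolding sorted_wrt_map
    by (rule sorted_wrt_mono_rel[rotated]) (use assms in \<open>auto simp: strict_mono_on_def\<close>)
  then show ?thesis
    using assms sorted_list_of_set.idem_if_sorted_distinct[of "map \<phi> (sorted_list_of_set S)"]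
    by (simp add: strict_sorted_iff)
qed

text \<open>\<open>word_of m x\<close> depends only on how the entries of \<open>x\<close> compare; this finite datum makes
  \<open>word_of m\<close> measurable.\<close>

definition order_pattern :: "nat \<Rightarrow> (nat \<Rightarrow> real) \<Rightarrow> (nat \<times> nat) set" where
  "order_pattern n x = {(i, j). i < n \<and> j < n \<and> x i \<le> x j}"

lemma word_of_eq_if_order_pattern_eq:
  assumes "order_pattern (2*m) x = order_pattern (2*m) y"
  shows "word_of m x = word_of m y"
proof -
  have le: "x i \<le> x j \<longleftrightarrow> y i \<le> y j" if "i < 2*m" "j < 2*m" for i j
    using assms that unfolding order_pattern_def set_eq_iff by blast
  then have eq: "x i = x j \<longleftrightarrow> y i = y j" if "i < 2*m" "j < 2*m" for i j
    using that by (metis order.antisym order.refl)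
  define \<phi> where "\<phi> z = y (inv_into {..<2*m} x z)" for z
  have \<phi>: "\<phi> (x i) = y i" if "i < 2*m" for i
  proof -
    have "inv_into {..<2*m} x (x i) < 2*m" "x (inv_into {..<2*m} x (x i)) = x i"
      using that by (auto intro!: inv_into_into[of _ x "{..<2*m}", simplified] f_inv_into_f)
    then show ?thesis using eq that unfolding \<phi>_def by auto
  qed
  have mono: "strict_mono_on (x ` {..<2*m}) \<phi>"
    unfolding strict_mono_on_def using \<phi> le by (auto simp: not_le[symmetric])
  have img: "y ` {..<2*m} = \<phi> ` x ` {..<2*m}"
    using \<phi> by (force simp: image_iff)
  have "(\<phi> z \<in> y ` {..<m}) = (z \<in> x ` {..<m})" if z: "z \<in> x ` {..<2*m}" for z
  proof -
    obtain i where i: "i < 2*m" "z = x i" using z by auto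
    then have "(y i \<in> y ` {..<m}) = (x i \<in> x ` {..<m})"
      using eq by (auto simp: image_iff)
    then show ?thesis using \<phi> i by simp
  qed
  then show ?thesis
    unfolding word_of_def img sorted_list_of_set_image_strict_mono[OF finite_imageI[OF finite_lessThan] mono]
    by (auto intro!: map_cong)
qed

lemma order_pattern_measurable:
  assumes "\<And>i. i < n \<Longrightarrow> (\<lambda>x. x i) \<in> borel_measurable M"
  shows "order_pattern n \<in> M \<rightarrow>\<^sub>M count_space (Pow ({..<n} \<times> {..<n}))"
proof -
  have "order_pattern n -` {R} \<inter> space M \<in> sets M" if "R \<subseteq> {..<n} \<times> {..<n}" for R
  proof -
    have "order_pattern n -` {R} \<inter> space M =
        {x \<in> space M. \<forall>i\<in>{..<n}. \<forall>j\<in>{..<n}. (x i \<le> x j) = ((i, j) \<in> R)}"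
      using that unfolding order_pattern_def by (auto simp: set_eq_iff)
    also have "\<dots> \<in> sets M"
    proof -
      have "{x \<in> space M. (x i \<le> x j) = c} \<in> sets M" if "i < n" "j < n" for i j c
        using assms[OF that(1)] assms[OF that(2)]
        by (cases c) (simp_all add: not_le borel_measurable_le borel_measurable_less)
      then show ?thesis by (intro sets.sets_Collect_finite_All) auto
    qed
    finally show ?thesis .
  qed
  moreover have "order_pattern n \<in> space M \<rightarrow> Pow ({..<n} \<times> {..<n})"
    by (auto simp: order_pattern_def)
  ultimately show ?thesis
    by (subst measurable_count_space_eq2) auto
qed

lemma word_of_measurable:
  assumes "\<And>i. i < 2*m \<Longrightarrow> (\<lambda>x. x i) \<in> borel_measurable M"
  shows "word_of m \<in> M \<rightarrow>\<^sub>M count_space UNIV"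
proof -
  define F where "F R = word_of m (SOME x. order_pattern (2*m) x = R)" for R
  have "word_of m = F \<circ> order_pattern (2*m)"
  proof
    fix x
    have "order_pattern (2*m) (SOME y. order_pattern (2*m) y = order_pattern (2*m) x) = order_pattern (2*m) x"
      by (rule someI[of _ x]) (rule refl)
    then show "word_of m x = (F \<circ> order_pattern (2*m)) x"
      unfolding F_def comp_def by (rule word_of_eq_if_order_pattern_eq[symmetric])
  qed
  also have "\<dots> \<in> M \<rightarrow>\<^sub>M count_space UNIV"
    by (rule measurable_comp[OF order_pattern_measurable[OF assms]]) simp_all
  finally show ?thesis .
qed

lemma PiM_diagonal_null:
  fixes M :: "'i \<Rightarrow> real measure"
  assumes sigma_finite: "\<And>i. sigma_finite_measure (M i)"
    and sets_M: "\<And>i. sets (M i) = sets borel"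
    and diffuse: "\<And>i x. emeasure (M i) {x} = 0"
    and "finite I" "i \<in> I" "j \<in> I" "i \<noteq> j"
  shows "{x \<in> space (PiM I M). x i = x j} \<in> null_sets (PiM I M)"
proof -
  interpret product_sigma_finite M
    by (simp add: product_sigma_finite_def sigma_finite)
  let ?A = "{x \<in> space (PiM I M). x i = x j}"
  have "(\<lambda>x. x k) \<in> borel_measurable (PiM I M)" if "k \<in> I" for k
    using measurable_component_singleton[OF that, of M] by (simp add: measurable_cong_sets[OF refl sets_M])
  then have A: "?A \<in> sets (PiM I M)"
    using assms by (simp add: borel_measurable_eq)
  have "emeasure (PiM I M) ?A = (\<integral>\<^sup>+ x. indicator ?A x \<partial>PiM (insert i (I - {i})) M)"
    using A \<open>i \<in> I\<close> by (simp add: insert_absorb)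
  also have "\<dots> = (\<integral>\<^sup>+ x. \<integral>\<^sup>+ y. indicator ?A (x(i := y)) \<partial>M i \<partial>PiM (I - {i}) M)"
    using A assms by (intro product_nn_integral_insert) (simp_all add: insert_absorb)
  also have "\<dots> = (\<integral>\<^sup>+ x. 0 \<partial>PiM (I - {i}) M)"
  proof (rule nn_integral_cong)
    fix x
    have "(\<integral>\<^sup>+ y. indicator ?A (x(i := y)) \<partial>M i) \<le> (\<integral>\<^sup>+ y. indicator {x j} y \<partial>M i)"
      using assms by (intro nn_integral_mono) (auto simp: indicator_def)
    also have "\<dots> = 0"
      using diffuse sets_M by simp
    finally show "(\<integral>\<^sup>+ y. indicator ?A (x(i := y)) \<partial>M i) = 0" by simp
  qed
  finally show ?thesis
    using A by (simp add: null_sets_def)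
qed

lemma PiM_not_inj_on_null:
  fixes M :: "'i \<Rightarrow> real measure"
  assumes "\<And>i. sigma_finite_measure (M i)" and "\<And>i. sets (M i) = sets borel"
    and "\<And>i x. emeasure (M i) {x} = 0" and "finite I"
  shows "{x \<in> space (PiM I M). \<not> inj_on x I} \<in> null_sets (PiM I M)"
proof -
  let ?D = "{(i, j) \<in> I \<times> I. i \<noteq> j}"
  have "{x \<in> space (PiM I M). \<not> inj_on x I} = (\<Union>(i, j)\<in>?D. {x \<in> space (PiM I M). x i = x j})"
    unfolding inj_on_def by blast
  also have "\<dots> \<in> null_sets (PiM I M)"
  proof (rule null_sets.finite_UN)
    show "finite ?D"
      by (rule finite_subset[of _ "I \<times> I"]) (use \<open>finite I\<close> in auto)
  qed (use assms in \<open>auto intro!: PiM_diagonal_null\<close>)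
  finally show ?thesis .
qed

lemma length_filter_sorted_list_of_set:
  assumes "finite I"
  shows "length (filter P (sorted_list_of_set I)) = card {i \<in> I. P i}"
proof -
  have "length (filter P (sorted_list_of_set I)) = card (set (filter P (sorted_list_of_set I)))"
    by (rule distinct_card[symmetric]) simp
  then show ?thesis
    using assms by simp
qed

lemma NN_Wn: "w \<in> Wn m \<Longrightarrow> NN w = m"
  by (simp add: Wn_def NN_def)

lemma Wall_eq_Wn_NN: "v \<in> Wall \<longleftrightarrow> v \<in> Wn (NN v)"
  by (auto simp: Wall_def Wn_def NN_def)

lemma length_Wn: "w \<in> Wn m \<Longrightarrow> length w = 2*m"
  using sum_length_filter_compl[of id w] by (simp add: Wn_def num_a_def num_b_def)

lemma finite_Wn: "finite (Wn m)"
proof (rule finite_subset)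
  show "Wn m \<subseteq> {xs. set xs \<subseteq> UNIV \<and> length xs = 2*m}"
    using length_Wn by auto
qed (intro finite_lists_length_eq, simp)

lemma word_of_in_Wn:
  assumes "inj_on x {..<2*m}"
  shows "word_of m x \<in> Wn m"
proof -
  let ?S = "x ` {..<2*m}"
  have "num_a (word_of m x) = card {z \<in> ?S. z \<in> x ` {..<m}}"
    unfolding num_a_def word_of_def by (simp add: length_filter_sorted_list_of_set)
  also have "{z \<in> ?S. z \<in> x ` {..<m}} = x ` {..<m}" by auto
  finally have "num_a (word_of m x) = m"
    using assms by (simp add: card_image inj_on_subset)
  moreover have "num_b (word_of m x) = card {z \<in> ?S. z \<notin> x ` {..<m}}"
    unfolding num_b_def word_of_def by (simp add: length_filter_sorted_list_of_set)
  moreover have "{z \<in> ?S. z \<notin> x ` {..<m}} = x ` {m..<2*m}"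
  proof (intro equalityI subsetI)
    fix z assume "z \<in> {z \<in> ?S. z \<notin> x ` {..<m}}"
    then obtain i where "i < 2*m" "z = x i" "\<not> i < m" by auto
    then show "z \<in> x ` {m..<2*m}" by auto
  next
    fix z assume "z \<in> x ` {m..<2*m}"
    then obtain i where i: "m \<le> i" "i < 2*m" "z = x i" by auto
    have "x i \<noteq> x j" if "j < m" for j
      using assms i that inj_onD[of x "{..<2*m}" i j] by auto
    then show "z \<in> {z \<in> ?S. z \<notin> x ` {..<m}}" using i by auto
  qed
  moreover have "card (x ` {m..<2*m}) = m"
    using assms by (subst card_image) (auto intro: inj_on_subset)
  ultimately show ?thesis by (simp add: Wn_def)
qed

lemma sets_limit_word_law: "sets (limit_word_law \<mu> \<nu> m) = sets (count_space UNIV)"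
  by (simp add: limit_word_law_def)

locale diffuse_prob_pair =
  \<mu>: prob_space \<mu> + \<nu>: prob_space \<nu> for \<mu> \<nu> :: "real measure" +
  assumes sets_\<mu>: "sets \<mu> = sets borel" and sets_\<nu>: "sets \<nu> = sets borel"
    and diffuse_\<mu>: "\<And>x. measure \<mu> {x} = 0" and diffuse_\<nu>: "\<And>x. measure \<nu> {x} = 0"
begin

lemma prob_space_factor: "prob_space (if i < m then \<mu> else \<nu>)"
  by (simp add: \<mu>.prob_space_axioms \<nu>.prob_space_axioms)

lemma sets_factor: "sets (if i < m then \<mu> else \<nu>) = sets borel"
  by (simp add: sets_\<mu> sets_\<nu>)

lemma emeasure_factor_singleton: "emeasure (if i < m then \<mu> else \<nu>) {x} = 0"
  by (simp add: \<mu>.emeasure_eq_measure \<nu>.emeasure_eq_measure diffuse_\<mu> diffuse_\<nu>)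

lemma prob_space_prodM: "prob_space (prodM \<mu> \<nu> m)"
  unfolding prodM_def by (intro prob_space_PiM prob_space_factor)

lemma prodM_not_inj_on_null:
  "{x \<in> space (prodM \<mu> \<nu> m). \<not> inj_on x {..<2*m}} \<in> null_sets (prodM \<mu> \<nu> m)"
  unfolding prodM_def
  by (intro PiM_not_inj_on_null prob_space_imp_sigma_finite prob_space_factor sets_factor
      emeasure_factor_singleton finite_lessThan)

lemma word_of_measurable_prodM: "word_of m \<in> prodM \<mu> \<nu> m \<rightarrow>\<^sub>M count_space UNIV"
proof (rule word_of_measurable)
  fix i assume "i < 2*m"
  then have "(\<lambda>x. x i) \<in> prodM \<mu> \<nu> m \<rightarrow>\<^sub>M (if i < m then \<mu> else \<nu>)"
    unfolding prodM_def by (intro measurable_component_singleton) simp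
  then show "(\<lambda>x. x i) \<in> borel_measurable (prodM \<mu> \<nu> m)"
    by (simp add: measurable_cong_sets[OF refl sets_factor])
qed

lemma prob_space_limit_word_law: "prob_space (limit_word_law \<mu> \<nu> m)"
  unfolding limit_word_law_def
  by (rule prob_space.prob_space_distr[OF prob_space_prodM word_of_measurable_prodM])

lemma measure_limit_word_law_singleton:
  "measure (limit_word_law \<mu> \<nu> m) {w} = measure (prodM \<mu> \<nu> m) (S_set \<mu> \<nu> m w)"
proof -
  let ?P = "prodM \<mu> \<nu> m"
  have "measure (limit_word_law \<mu> \<nu> m) {w} = measure ?P (word_of m -` {w} \<inter> space ?P)"
    unfolding limit_word_law_def by (rule measure_distr[OF word_of_measurable_prodM]) simp
  also have "\<dots> = measure ?P (word_of m -` {w} \<inter> space ?P - {x \<in> space ?P. \<not> inj_on x {..<2*m}})"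
    using word_of_measurable_prodM prodM_not_inj_on_null
    by (intro measure_Diff_null_set[symmetric]) (auto simp: measurable_def)
  also have "word_of m -` {w} \<inter> space ?P - {x \<in> space ?P. \<not> inj_on x {..<2*m}} = S_set \<mu> \<nu> m w"
    unfolding S_set_def by auto
  finally show ?thesis .
qed

lemma AE_limit_word_law_Wn: "AE w in limit_word_law \<mu> \<nu> m. w \<in> Wn m"
proof -
  have "AE x in prodM \<mu> \<nu> m. word_of m x \<in> Wn m"
    by (rule AE_I'[OF prodM_not_inj_on_null]) (auto intro: word_of_in_Wn)
  then show ?thesis
    unfolding limit_word_law_def by (simp add: AE_distr_iff[OF word_of_measurable_prodM])
qed

end

definition subword_choices :: "word \<Rightarrow> nat \<Rightarrow> (nat set \<times> nat set) set" where
  "subword_choices u m = {(A, B). A \<subseteq> {i. i < length u \<and> u ! i} \<and> card A = m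
                                 \<and> B \<subseteq> {i. i < length u \<and> \<not> u ! i} \<and> card B = m}"

definition select_letters :: "word \<Rightarrow> nat set \<times> nat set \<Rightarrow> word" where
  "select_letters u = (\<lambda>(A, B). map (\<lambda>i. u ! i) (sorted_list_of_set (A \<union> B)))"

lemma random_subword_eq:
  "random_subword u m = map_pmf (select_letters u) (pmf_of_set (subword_choices u m))"
  unfolding random_subword_def select_letters_def subword_choices_def ..

lemma subword_choices_eq_Times:
  "subword_choices u m = {A. A \<subseteq> {i. i < length u \<and> u ! i} \<and> card A = m}
                       \<times> {B. B \<subseteq> {i. i < length u \<and> \<not> u ! i} \<and> card B = m}"
  unfolding subword_choices_def by auto

lemma finite_subword_choices: "finite (subword_choices u m)"
  unfolding subword_choices_eq_Times by (intro finite_cartesian_product) auto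

lemma card_letter_positions:
  "card {i. i < length u \<and> u ! i} = num_a u" "card {i. i < length u \<and> \<not> u ! i} = num_b u"
  by (simp_all add: num_a_def num_b_def length_filter_conv_card)

lemma card_subword_choices: "u \<in> Wn n \<Longrightarrow> card (subword_choices u m) = (n choose m)^2"
  unfolding subword_choices_eq_Times card_cartesian_product
  by (simp add: n_subsets card_letter_positions Wn_def power2_eq_square)

lemma subword_choices_nonempty:
  assumes "u \<in> Wn n" and "m \<le> n"
  shows "subword_choices u m \<noteq> {}"
proof -
  obtain A where "A \<subseteq> {i. i < length u \<and> u ! i}" "card A = m"
    using assms obtain_subset_with_card_n[of m "{i. i < length u \<and> u ! i}"]
    by (auto simp: Wn_def card_letter_positions)
  moreover obtain B where "B \<subseteq> {i. i < length u \<and> \<not> u ! i}" "card B = m"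
    using assms obtain_subset_with_card_n[of m "{i. i < length u \<and> \<not> u ! i}"]
    by (auto simp: Wn_def card_letter_positions)
  ultimately show ?thesis
    unfolding subword_choices_def by auto
qed

lemma select_letters_in_Wn:
  assumes "(A, B) \<in> subword_choices u m"
  shows "select_letters u (A, B) \<in> Wn m"
proof -
  have A: "A \<subseteq> {i. i < length u \<and> u ! i}" "card A = m"
    and B: "B \<subseteq> {i. i < length u \<and> \<not> u ! i}" "card B = m"
    using assms unfolding subword_choices_def by auto
  have "finite (A \<union> B)"
    using A B by (auto intro: finite_subset[of _ "{..<length u}"])
  moreover have "{i \<in> A \<union> B. u ! i} = A" and "{i \<in> A \<union> B. \<not> u ! i} = B"
    using A B by auto
  ultimately show ?thesis
    using A B unfolding select_letters_def Wn_def num_a_def num_b_def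
    by (simp add: length_filter_sorted_list_of_set)
qed

lemma card_select_letters_preimage:
  assumes w: "w \<in> Wn m"
  shows "card {p \<in> subword_choices u m. select_letters u p = w} = subword_count u w"
proof -
  let ?S = "{p \<in> subword_choices u m. select_letters u p = w}"
  let ?T = "{I. I \<subseteq> {..<length u} \<and> card I = length w \<and> map (\<lambda>i. u ! i) (sorted_list_of_set I) = w}"
  let ?join = "\<lambda>(A, B). A \<union> B :: nat set"
  let ?split = "\<lambda>I. ({i \<in> I. u ! i}, {i \<in> I. \<not> u ! i})"
  have "bij_betw ?join ?S ?T"
  proof (rule bij_betw_byWitness[where f' = ?split])
    show "\<forall>p\<in>?S. ?split (?join p) = p"
      unfolding subword_choices_def by auto
    show "\<forall>I\<in>?T. ?join (?split I) = I"
      by auto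
    show "?join ` ?S \<subseteq> ?T"
    proof (rule image_subsetI)
      fix p assume "p \<in> ?S"
      then obtain A B where p: "p = (A, B)" and sel: "select_letters u (A, B) = w"
        and A: "A \<subseteq> {i. i < length u \<and> u ! i}" "card A = m"
        and B: "B \<subseteq> {i. i < length u \<and> \<not> u ! i}" "card B = m"
        unfolding subword_choices_def by (cases p) auto
      have "card (A \<union> B) = length w"
        using A B length_Wn[OF w]
        by (subst card_Un_disjoint) (auto intro: finite_subset[of _ "{..<length u}"])
      then show "?join p \<in> ?T"
        using A B sel unfolding p select_letters_def by auto
    qed
    show "?split ` ?T \<subseteq> ?S"
    proof (rule image_subsetI)
      fix I assume "I \<in> ?T"
      then have I: "I \<subseteq> {..<length u}" "card I = length w"
        and sel: "map (\<lambda>i. u ! i) (sorted_list_of_set I) = w"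
        by auto
      have "finite I"
        using I(1) by (rule finite_subset) simp
      then have "card {i \<in> I. u ! i} = num_a w" "card {i \<in> I. \<not> u ! i} = num_b w"
        unfolding sel[symmetric] num_a_def num_b_def by (simp_all add: length_filter_sorted_list_of_set)
      moreover have "{i \<in> I. u ! i} \<union> {i \<in> I. \<not> u ! i} = I"
        by auto
      ultimately show "?split I \<in> ?S"
        using I sel w unfolding subword_choices_def select_letters_def Wn_def by auto
    qed
  qed
  then show ?thesis
    unfolding subword_count_def by (rule bij_betw_same_card)
qed

lemma pmf_random_subword:
  assumes u: "u \<in> Wn n" and w: "w \<in> Wn m" and "m \<le> n"
  shows "pmf (random_subword u m) w = real (subword_count u w) / (real (n choose m))^2"
proof -
  have "pmf (random_subword u m) w = measure (pmf_of_set (subword_choices u m)) (select_letters u -` {w})"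
    unfolding random_subword_eq pmf_map ..
  also have "\<dots> = card {p \<in> subword_choices u m. select_letters u p = w} / card (subword_choices u m)"
    using finite_subword_choices subword_choices_nonempty[OF u \<open>m \<le> n\<close>]
    by (simp add: measure_pmf_of_set Int_def conj_commute)
  finally show ?thesis
    by (simp add: card_select_letters_preimage[OF w] card_subword_choices[OF u])
qed

lemma set_pmf_random_subword:
  assumes "u \<in> Wn n" and "m \<le> n"
  shows "set_pmf (random_subword u m) \<subseteq> Wn m"
  using finite_subword_choices subword_choices_nonempty[OF assms]
  unfolding random_subword_eq by (auto intro: select_letters_in_Wn)

lemma integral_finite_support:
  fixes f :: "'a \<Rightarrow> real"
  assumes "finite W" and sets_M: "sets M = sets (count_space UNIV)"
    and "finite_measure M" and support: "AE x in M. x \<in> W"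
  shows "integral\<^sup>L M f = (\<Sum>w\<in>W. f w * measure M {w})"
proof -
  interpret finite_measure M by fact
  have "integral\<^sup>L M f = (\<integral>x. f x * indicator W x \<partial>M)"
    using support by (intro integral_cong_AE) (auto simp: measurable_cong_sets[OF sets_M refl])
  also have "\<dots> = (\<Sum>w\<in>W. f w * measure M {w})"
    using assms by (intro integral_indicator_finite_real) (simp_all add: less_top[symmetric])
  finally show ?thesis .
qed

lemma conv_in_distr_iff_singletons:
  fixes Ms :: "nat \<Rightarrow> word measure"
  assumes W: "finite W"
    and sets_Ms: "\<And>k. sets (Ms k) = sets (count_space UNIV)" and fin_Ms: "\<And>k. finite_measure (Ms k)"
    and AE_Ms: "eventually (\<lambda>k. AE x in Ms k. x \<in> W) sequentially"
    and sets_M: "sets M = sets (count_space UNIV)" and fin_M: "finite_measure M"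
    and AE_M: "AE x in M. x \<in> W"
  shows "conv_in_distr Ms M \<longleftrightarrow> (\<forall>w\<in>W. (\<lambda>k. measure (Ms k) {w}) \<longlonglongrightarrow> measure M {w})"
proof
  assume conv: "conv_in_distr Ms M"
  have integral_indicator_singleton: "integral\<^sup>L N (indicator {w}) = measure N {w}"
    if "sets N = sets (count_space UNIV)" "finite_measure N" for N :: "word measure" and w
    using that by (simp add: finite_measure.emeasure_finite)
  show "\<forall>w\<in>W. (\<lambda>k. measure (Ms k) {w}) \<longlonglongrightarrow> measure M {w}"
  proof
    fix w
    have "bounded (range (indicator {w} :: word \<Rightarrow> real))"
      by (rule boundedI[of _ 1]) (auto simp: indicator_def)
    then have "(\<lambda>k. integral\<^sup>L (Ms k) (indicator {w} :: word \<Rightarrow> real)) \<longlonglongrightarrow> integral\<^sup>L M (indicator {w})"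
      by (rule conv[unfolded conv_in_distr_def, rule_format])
    then show "(\<lambda>k. measure (Ms k) {w}) \<longlonglongrightarrow> measure M {w}"
      by (simp add: integral_indicator_singleton sets_Ms fin_Ms sets_M fin_M)
  qed
next
  assume singletons: "\<forall>w\<in>W. (\<lambda>k. measure (Ms k) {w}) \<longlonglongrightarrow> measure M {w}"
  show "conv_in_distr Ms M"
    unfolding conv_in_distr_def
  proof (intro allI impI)
    fix f :: "word \<Rightarrow> real"
    have "eventually (\<lambda>k. integral\<^sup>L (Ms k) f = (\<Sum>w\<in>W. f w * measure (Ms k) {w})) sequentially"
      using AE_Ms by eventually_elim (rule integral_finite_support[OF W sets_Ms fin_Ms])
    moreover have "(\<lambda>k. \<Sum>w\<in>W. f w * measure (Ms k) {w}) \<longlonglongrightarrow> (\<Sum>w\<in>W. f w * measure M {w})"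
      using singletons by (intro tendsto_sum tendsto_mult_left) auto
    ultimately show "(\<lambda>k. integral\<^sup>L (Ms k) f) \<longlonglongrightarrow> integral\<^sup>L M f"
      by (simp add: tendsto_cong integral_finite_support[OF W sets_M fin_M AE_M])
  qed
qed

lemma DM_kernel_eq_ratio:
  assumes "NN v = m" and "m \<le> NN u"
  shows "DM_kernel v u = real ((2*m) choose m) * (real (subword_count u v) / (real (NN u choose m))^2)"
  using assms by (simp add: DM_kernel_def)

lemma DM_converges_boundary_kernel_iff:
  assumes N_inf: "filterlim (\<lambda>k. NN (ys k)) at_top sequentially"
  shows "DM_converges ys (boundary_kernel \<mu> \<nu>) \<longleftrightarrow>
    (\<forall>m w. w \<in> Wn m \<longrightarrow>
       (\<lambda>k. real (subword_count (ys k) w) / (real (NN (ys k) choose m))^2)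
         \<longlonglongrightarrow> measure (prodM \<mu> \<nu> m) (S_set \<mu> \<nu> m w))"
proof -
  have kernel_iff: "((\<lambda>k. DM_kernel w (ys k)) \<longlonglongrightarrow> boundary_kernel \<mu> \<nu> w) \<longleftrightarrow>
      (\<lambda>k. real (subword_count (ys k) w) / (real (NN (ys k) choose m))^2)
         \<longlonglongrightarrow> measure (prodM \<mu> \<nu> m) (S_set \<mu> \<nu> m w)"
    if w: "w \<in> Wn m" for m w
  proof -
    let ?c = "real ((2*m) choose m)"
    let ?r = "\<lambda>k. real (subword_count (ys k) w) / (real (NN (ys k) choose m))^2"
    let ?s = "measure (prodM \<mu> \<nu> m) (S_set \<mu> \<nu> m w)"
    have "eventually (\<lambda>k. m \<le> NN (ys k)) sequentially"
      using N_inf by (simp add: filterlim_at_top)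
    then have "eventually (\<lambda>k. DM_kernel w (ys k) = ?c * ?r k) sequentially"
      by eventually_elim (rule DM_kernel_eq_ratio[OF NN_Wn[OF w]])
    moreover have "boundary_kernel \<mu> \<nu> w = ?c * ?s"
      using NN_Wn[OF w] by (simp add: boundary_kernel_def)
    ultimately have "((\<lambda>k. DM_kernel w (ys k)) \<longlonglongrightarrow> boundary_kernel \<mu> \<nu> w) \<longleftrightarrow>
        ((\<lambda>k. ?c * ?r k) \<longlonglongrightarrow> ?c * ?s)"
      by (simp only: tendsto_cong)
    also have "\<dots> \<longleftrightarrow> (?r \<longlonglongrightarrow> ?s)"
      by (rule tendsto_mult_left_iff) simp
    finally show ?thesis .
  qed
  show ?thesis
    unfolding DM_converges_def
  proof (intro iffI allI impI ballI)
    fix m w assume "\<forall>v\<in>Wall. (\<lambda>k. DM_kernel v (ys k)) \<longlonglongrightarrow> boundary_kernel \<mu> \<nu> v" and w: "w \<in> Wn m"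
    moreover have "w \<in> Wall"
      using w by (simp add: Wall_eq_Wn_NN NN_Wn)
    ultimately show "(\<lambda>k. real (subword_count (ys k) w) / (real (NN (ys k) choose m))^2)
         \<longlonglongrightarrow> measure (prodM \<mu> \<nu> m) (S_set \<mu> \<nu> m w)"
      using kernel_iff[OF w] by blast
  next
    fix v assume "\<forall>m w. w \<in> Wn m \<longrightarrow> (\<lambda>k. real (subword_count (ys k) w) / (real (NN (ys k) choose m))^2)
         \<longlonglongrightarrow> measure (prodM \<mu> \<nu> m) (S_set \<mu> \<nu> m w)" and "v \<in> Wall"
    then show "(\<lambda>k. DM_kernel v (ys k)) \<longlonglongrightarrow> boundary_kernel \<mu> \<nu> v"
      using kernel_iff[of v "NN v"] by (simp add: Wall_eq_Wn_NN)
  qed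
qed

context diffuse_prob_pair
begin

lemma conv_in_distr_random_subword_iff:
  assumes ys_W: "\<And>k. ys k \<in> Wn (NN (ys k))"
    and N_inf: "filterlim (\<lambda>k. NN (ys k)) at_top sequentially"
  shows "conv_in_distr (\<lambda>k. measure_pmf (random_subword (ys k) m)) (limit_word_law \<mu> \<nu> m) \<longleftrightarrow>
    (\<forall>w. w \<in> Wn m \<longrightarrow>
       (\<lambda>k. real (subword_count (ys k) w) / (real (NN (ys k) choose m))^2)
         \<longlonglongrightarrow> measure (prodM \<mu> \<nu> m) (S_set \<mu> \<nu> m w))"
proof -
  have large: "eventually (\<lambda>k. m \<le> NN (ys k)) sequentially"
    using N_inf by (simp add: filterlim_at_top)
  have "eventually (\<lambda>k. AE x in measure_pmf (random_subword (ys k) m). x \<in> Wn m) sequentially"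
    using large by eventually_elim (use set_pmf_random_subword[OF ys_W] in \<open>auto simp: AE_measure_pmf_iff\<close>)
  then have "conv_in_distr (\<lambda>k. measure_pmf (random_subword (ys k) m)) (limit_word_law \<mu> \<nu> m) \<longleftrightarrow>
      (\<forall>w\<in>Wn m. (\<lambda>k. measure (measure_pmf (random_subword (ys k) m)) {w})
         \<longlonglongrightarrow> measure (limit_word_law \<mu> \<nu> m) {w})"
    by (intro conv_in_distr_iff_singletons finite_Wn sets_limit_word_law AE_limit_word_law_Wn
        prob_space.finite_measure prob_space_limit_word_law prob_space_measure_pmf) simp
  also have "\<dots> \<longleftrightarrow>
      (\<forall>w\<in>Wn m. (\<lambda>k. pmf (random_subword (ys k) m) w) \<longlonglongrightarrow> measure (prodM \<mu> \<nu> m) (S_set \<mu> \<nu> m w))"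
    by (simp add: measure_pmf_single measure_limit_word_law_singleton)
  also have "\<dots> \<longleftrightarrow> (\<forall>w\<in>Wn m. (\<lambda>k. real (subword_count (ys k) w) / (real (NN (ys k) choose m))^2)
         \<longlonglongrightarrow> measure (prodM \<mu> \<nu> m) (S_set \<mu> \<nu> m w))"
  proof (intro ball_cong refl tendsto_cong)
    fix w assume "w \<in> Wn m"
    show "eventually (\<lambda>k. pmf (random_subword (ys k) m) w =
        real (subword_count (ys k) w) / (real (NN (ys k) choose m))^2) sequentially"
      using large by eventually_elim (rule pmf_random_subword[OF ys_W \<open>w \<in> Wn m\<close>])
  qed
  finally show ?thesis
    by (simp only: Ball_def)
qed

end

theorem mainTheorem7:
  fixes ys :: "nat \<Rightarrow> word" and \<mu> \<nu> :: "real measure"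
  assumes ys_W: "\<And>k. ys k \<in> Wn (NN (ys k))"
    and N_inf: "filterlim (\<lambda>k. NN (ys k)) at_top sequentially"
    and mu_prob: "prob_space \<mu>" and mu_sets: "sets \<mu> = sets borel"
    and nu_prob: "prob_space \<nu>" and nu_sets: "sets \<nu> = sets borel"
    and mu_supp: "measure \<mu> {0..1} = 1" and nu_supp: "measure \<nu> {0..1} = 1"
    and mu_diffuse: "\<And>x. measure \<mu> {x} = 0" and nu_diffuse: "\<And>x. measure \<nu> {x} = 0"
    and leb: "\<And>A. A \<in> sets borel \<Longrightarrow>
                 (measure \<mu> A + measure \<nu> A) / 2 = measure lborel (A \<inter> {0..1})"
  shows "(DM_converges ys (boundary_kernel \<mu> \<nu>) \<longleftrightarrow>
           (\<forall>m w. w \<in> Wn m \<longrightarrow>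
              (\<lambda>k. real (subword_count (ys k) w) / (real (NN (ys k) choose m))^2)
                \<longlonglongrightarrow> measure (prodM \<mu> \<nu> m) (S_set \<mu> \<nu> m w)))
       \<and> (DM_converges ys (boundary_kernel \<mu> \<nu>) \<longleftrightarrow>
           (\<forall>m. conv_in_distr (\<lambda>k. measure_pmf (random_subword (ys k) m))
                              (limit_word_law \<mu> \<nu> m)))"
proof -
  interpret diffuse_prob_pair \<mu> \<nu>
    using mu_prob nu_prob mu_sets nu_sets mu_diffuse nu_diffuse
    by (simp add: diffuse_prob_pair_def diffuse_prob_pair_axioms_def)
  show ?thesis
    unfolding DM_converges_boundary_kernel_iff[OF N_inf] conv_in_distr_random_subword_iff[OF ys_W N_inf]
    by simp
qed

end
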